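(* Let $M$ be a $3$-connected matroid, let $\mathcal{T}$ be a tangle of $M$, and let $C,D$ be disjoint subsets of $E(M)$ such that $C\cup D$ is independent in the tangle matroid $M(\mathcal{T})$ and $M/C\setminus D$ is $3$-connected. Let $G=R(M,C,D)$ and let $S\subseteq C\cup D$. Then the matroid $M/(C\setminus S)\setminus(D\setminus S)$ is $3$-connected if and only if the induced subgraph $G[S]$ has no isolated non-privileged vertices.
   Context: $\lambda_M(X) = \rank_M(X) + \rank_M(E(M)\setminus X) - \rank(M)$. A tangle of order $\theta$ of $M$ is a collection $\mathcal{T}$ of subsets of $E(M)$ such that: (i) $\lambda_M(X)<\theta$ for all $X\in\mathcal{T}$; (ii) for every $X\subseteq E(M)$ with $\lambda_M(X)<\theta$, either $X\in\mathcal{T}$ or $E(M)\setminus X\in\mathcal{T}$; (iii) if $X,Y,Z\in\mathcal{T}$ then $X\cup Y\cup Z\neq E(M)$; (iv) $E(M)\setminus\{e\}\notin\mathcal{T}$ for every $e\in E(M)$. The tangle matroid $M(\mathcal{T})$ has rank function $\rank_{\mathcal{T}}(X) = \min\{\lambda_M(Y): X\subseteq Y\in\mathcal{T}\}$ if some member of $\mathcal{T}$ contains $X$, and $\theta$ otherwise. For $M$ 3-connected and disjoint $C,D\subseteq E(M)$ with $M/C\setminus D$ 3-connected, the restoration graph $R(M,C,D)$ is the bipartite graph with vertex set $C\cup D$ and an edge $cd$ (for $c\in C$, $d\in D$) exactly when $M/(C\setminus c)\setminus(D\setminus d)$ is 3-connected. An element $e\in C\cup D$ is privileged if $M/(C\setminus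 e)\setminus(D\setminus e)$ is 3-connected. $G[S]$ denotes the subgraph induced on $S$. *)

theory Defs
  imports Main
begin

text \<open>A matroid is represented by a finite ground set E and a rank function r
satisfying the rank axioms (on subsets of E).\<close>

definition matroid_rank :: "'a set \<Rightarrow> ('a set \<Rightarrow> nat) \<Rightarrow> bool" where
  "matroid_rank E r \<longleftrightarrow> finite E
     \<and> (\<forall>X. X \<subseteq> E \<longrightarrow> r X \<le> card X)
     \<and> (\<forall>X Y. X \<subseteq> Y \<and> Y \<subseteq> E \<longrightarrow> r X \<le> r Y)
     \<and> (\<forall>X Y. X \<subseteq> E \<and> Y \<subseteq> E \<longrightarrow> r (X \<union> Y) + r (X \<inter> Y) \<le> r X + r Y)"

definition conn_fun :: "'a set \<Rightarrow> ('a set \<Rightarrow> nat) \<Rightarrow> 'a set \<Rightarrow> nat" where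
  "conn_fun E r X = r X + r (E - X) - r E"

text \<open>3-connected (Tutte): no 1-separation and no 2-separation. A k-separation is a
partition (A, E - A) with |A|, |E - A| >= k and r(A) + r(E-A) - r(M) <= k - 1.\<close>

definition three_connected :: "'a set \<Rightarrow> ('a set \<Rightarrow> nat) \<Rightarrow> bool" where
  "three_connected E r \<longleftrightarrow>
     (\<forall>A. A \<subseteq> E \<longrightarrow>
        (card A \<ge> 1 \<and> card (E - A) \<ge> 1 \<longrightarrow> conn_fun E r A \<ge> 1)
      \<and> (card A \<ge> 2 \<and> card (E - A) \<ge> 2 \<longrightarrow> conn_fun E r A \<ge> 2))"

text \<open>The minor M/C\D has ground set E - (C \<union> D) and rank function
X \<mapsto> r(X \<union> C) - r(C).\<close>

definition minor_ground :: "'a set \<Rightarrow> 'a set \<Rightarrow> 'a set \<Rightarrow> 'a set" where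
  "minor_ground E C D = E - (C \<union> D)"

definition minor_rank :: "('a set \<Rightarrow> nat) \<Rightarrow> 'a set \<Rightarrow> 'a set \<Rightarrow> nat" where
  "minor_rank r C X = r (X \<union> C) - r C"

definition minor_3conn :: "'a set \<Rightarrow> ('a set \<Rightarrow> nat) \<Rightarrow> 'a set \<Rightarrow> 'a set \<Rightarrow> bool" where
  "minor_3conn E r C D \<longleftrightarrow> three_connected (minor_ground E C D) (minor_rank r C)"

definition is_tangle :: "'a set \<Rightarrow> ('a set \<Rightarrow> nat) \<Rightarrow> nat \<Rightarrow> 'a set set \<Rightarrow> bool" where
  "is_tangle E r \<theta> T \<longleftrightarrow>
     T \<subseteq> Pow E
   \<and> (\<forall>X\<in>T. conn_fun E r X < \<theta>)
   \<and> (\<forall>X. X \<subseteq> E \<and> conn_fun E r X < \<theta> \<longrightarrow> X \<in> T \<or> E - X \<in> T)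
   \<and> (\<forall>X\<in>T. \<forall>Y\<in>T. \<forall>Z\<in>T. X \<union> Y \<union> Z \<noteq> E)
   \<and> (\<forall>e\<in>E. E - {e} \<notin> T)"

definition tangle_rank :: "'a set \<Rightarrow> ('a set \<Rightarrow> nat) \<Rightarrow> nat \<Rightarrow> 'a set set \<Rightarrow> 'a set \<Rightarrow> nat" where
  "tangle_rank E r \<theta> T X =
     (if \<exists>Y\<in>T. X \<subseteq> Y then Min {conn_fun E r Y | Y. Y \<in> T \<and> X \<subseteq> Y} else \<theta>)"

definition tangle_indep :: "'a set \<Rightarrow> ('a set \<Rightarrow> nat) \<Rightarrow> nat \<Rightarrow> 'a set set \<Rightarrow> 'a set \<Rightarrow> bool" where
  "tangle_indep E r \<theta> T X \<longleftrightarrow> X \<subseteq> E \<and> tangle_rank E r \<theta> T X = card X"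

definition restoration_adj :: "'a set \<Rightarrow> ('a set \<Rightarrow> nat) \<Rightarrow> 'a set \<Rightarrow> 'a set \<Rightarrow> 'a \<Rightarrow> 'a \<Rightarrow> bool" where
  "restoration_adj E r C D x y \<longleftrightarrow>
     (x \<in> C \<and> y \<in> D \<and> minor_3conn E r (C - {x}) (D - {y}))
   \<or> (y \<in> C \<and> x \<in> D \<and> minor_3conn E r (C - {y}) (D - {x}))"

definition privileged :: "'a set \<Rightarrow> ('a set \<Rightarrow> nat) \<Rightarrow> 'a set \<Rightarrow> 'a set \<Rightarrow> 'a \<Rightarrow> bool" where
  "privileged E r C D e \<longleftrightarrow> e \<in> C \<union> D \<and> minor_3conn E r (C - {e}) (D - {e})"

definition no_isolated_nonpriv :: "'a set \<Rightarrow> ('a set \<Rightarrow> nat) \<Rightarrow> 'a set \<Rightarrow> 'a set \<Rightarrow> 'a set \<Rightarrow> bool" where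
  "no_isolated_nonpriv E r C D S \<longleftrightarrow>
     (\<forall>v\<in>S. \<not> privileged E r C D v \<longrightarrow> (\<exists>u\<in>S. restoration_adj E r C D v u))"

end

theory Submission
  imports Defs
begin

text \<open>Write \<open>Z = C \<union> D\<close>, \<open>F = E - Z\<close> and \<open>N\<^sub>S = M/(C - S)\(D - S)\<close>. Tangle-independence of
  \<open>Z\<close> gives \<open>\<lambda>\<^sub>M(W) \<ge> |Z|\<close> for every \<open>W \<supseteq> Z\<close> covered by two sets smaller than the order;
  hence \<open>Z\<close> is independent, \<open>F\<close> is spanning and \<open>\<lambda>\<^sub>M(Z \<union> {x}) \<ge> |Z|\<close>. With this, 3-connectivity
  of \<open>N\<^sub>S\<close> becomes a condition on pairs: \<open>N\<^sub>S\<close> is 3-connected iff no pair \<open>{s, x}\<close> with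
  \<open>s \<in> S\<close>, \<open>x \<in> F\<close> is 2-separating, because a 2-separation of \<open>N\<^sub>S\<close> induces a low-order
  separation of the 3-connected \<open>N = N\<^bsub>{}\<^esub>\<close> and so has a side with at most one element of \<open>F\<close>.
  As the connectivity of a pair only grows with \<open>S\<close>, the pairs at \<open>s\<close> are certified by \<open>s\<close>
  being privileged or by an edge \<open>su\<close> inside \<open>S\<close>. Conversely, a non-privileged \<open>v \<in> S\<close>
  fails the pair condition in \<open>N\<^bsub>{v}\<^esub>\<close> but not in \<open>N\<^sub>S\<close>; submodularity then locates an
  element \<open>u \<in> S\<close> on the other side of \<open>C, D\<close> for which \<open>N\<^bsub>{v, u}\<^esub>\<close> passes every pair test.\<close>

section \<open>Connectivity of minors\<close>

text \<open>\<open>minor_conn E r A B\<close> is the connectivity function of \<open>M/A\B\<close>, written directly in terms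
  of \<open>r\<close> and kept in \<open>int\<close> so that no truncated subtraction occurs.\<close>

definition minor_conn :: "'a set \<Rightarrow> ('a set \<Rightarrow> nat) \<Rightarrow> 'a set \<Rightarrow> 'a set \<Rightarrow> 'a set \<Rightarrow> int" where
  "minor_conn E r A B X = int (r (X \<union> A)) + int (r (E - B - X)) - int (r A) - int (r (E - B))"

locale rank_matroid =
  fixes E :: "'a set" and r :: "'a set \<Rightarrow> nat"
  assumes matroid: "matroid_rank E r"
begin

lemma finite_ground: "finite E"
  using matroid unfolding matroid_rank_def by blast

lemma rank_le_card: "X \<subseteq> E \<Longrightarrow> r X \<le> card X"
  using matroid unfolding matroid_rank_def by blast

lemma rank_mono: "X \<subseteq> Y \<Longrightarrow> Y \<subseteq> E \<Longrightarrow> r X \<le> r Y"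
  using matroid unfolding matroid_rank_def by blast

lemma rank_submod: "X \<subseteq> E \<Longrightarrow> Y \<subseteq> E \<Longrightarrow> r (X \<union> Y) + r (X \<inter> Y) \<le> r X + r Y"
  using matroid unfolding matroid_rank_def by blast

lemma rank_empty: "r {} = 0"
  using rank_le_card[of "{}"] by simp

lemma rank_insert_le: "X \<subseteq> E \<Longrightarrow> e \<in> E \<Longrightarrow> r (insert e X) \<le> r X + 1"
  using rank_submod[of X "{e}"] rank_le_card[of "{e}"] by (cases "e \<in> X") (auto simp: insert_absorb)

lemma rank_union_le_card: "X \<subseteq> E \<Longrightarrow> Y \<subseteq> E \<Longrightarrow> r (X \<union> Y) \<le> r X + card Y"
proof (induction Y rule: infinite_finite_induct)
  case (infinite Y)
  then show ?case using finite_ground finite_subset by blast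
next
  case (insert e Y)
  have "r (X \<union> insert e Y) \<le> r (X \<union> Y) + 1"
    using rank_insert_le[of "X \<union> Y" e] insert.prems by auto
  then show ?case using insert by simp
qed simp

lemma rank_insert_eq_mono:
  assumes "Y \<subseteq> H" "H \<subseteq> E" "u \<in> E" "r (insert u Y) = r Y"
  shows "r (insert u H) = r H"
proof (cases "u \<in> H")
  case False
  have "H \<union> insert u Y = insert u H" "H \<inter> insert u Y = Y" using assms False by auto
  then have "r (insert u H) + r Y \<le> r H + r (insert u Y)"
    using rank_submod[of H "insert u Y"] assms by auto
  moreover have "r H \<le> r (insert u H)" using rank_mono[of H "insert u H"] assms by auto
  ultimately show ?thesis using assms(4) by linarith
qed (simp add: insert_absorb)

lemma rank_union_eq_of_insert_eq:
  "U \<subseteq> E \<Longrightarrow> H \<subseteq> E \<Longrightarrow> (\<And>u. u \<in> U \<Longrightarrow> r (insert u H) = r H) \<Longrightarrow> r (H \<union> U) = r H"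
proof (induction U rule: infinite_finite_induct)
  case (infinite U)
  then show ?case using finite_ground finite_subset by blast
next
  case (insert e U)
  then have "r (insert e (H \<union> U)) = r (H \<union> U)"
    using rank_insert_eq_mono[of H "H \<union> U" e] by auto
  then show ?case using insert by simp
qed simp

lemma minor_conn_nonneg:
  assumes "A \<subseteq> E - B" "X \<subseteq> E - B" "A \<inter> X = {}"
  shows "minor_conn E r A B X \<ge> 0"
proof -
  have "(X \<union> A) \<union> (E - B - X) = E - B" "(X \<union> A) \<inter> (E - B - X) = A" using assms by auto
  moreover have "r ((X \<union> A) \<union> (E - B - X)) + r ((X \<union> A) \<inter> (E - B - X)) \<le> r (X \<union> A) + r (E - B - X)"
    using rank_submod[of "X \<union> A" "E - B - X"] assms by auto
  ultimately show ?thesis unfolding minor_conn_def by simp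
qed

lemma conn_fun_minor:
  assumes "A \<subseteq> E" "B \<subseteq> E" "A \<inter> B = {}" "X \<subseteq> E - (A \<union> B)"
  shows "int (conn_fun (E - (A \<union> B)) (minor_rank r A) X) = minor_conn E r A B X"
proof -
  have ground: "(E - (A \<union> B) - X) \<union> A = E - B - X" "E - (A \<union> B) \<union> A = E - B" using assms by auto
  have "r A \<le> r (X \<union> A)" "r A \<le> r (E - B - X)" "r A \<le> r (E - B)"
    using rank_mono[of A "X \<union> A"] rank_mono[of A "E - B - X"] rank_mono[of A "E - B"] assms by auto
  moreover have "minor_conn E r A B X \<ge> 0" using minor_conn_nonneg[of A B X] assms by auto
  ultimately show ?thesis unfolding conn_fun_def minor_rank_def ground minor_conn_def
    by simp
qed

lemma minor_3conn_iff_minor_conn: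
  assumes "A \<subseteq> E" "B \<subseteq> E" "A \<inter> B = {}"
  shows "minor_3conn E r A B \<longleftrightarrow> (\<forall>X. X \<subseteq> E - (A \<union> B) \<longrightarrow>
     (card X \<ge> 1 \<and> card (E - (A \<union> B) - X) \<ge> 1 \<longrightarrow> minor_conn E r A B X \<ge> 1) \<and>
     (card X \<ge> 2 \<and> card (E - (A \<union> B) - X) \<ge> 2 \<longrightarrow> minor_conn E r A B X \<ge> 2))"
  unfolding minor_3conn_def three_connected_def minor_ground_def
  using conn_fun_minor[OF assms] by (smt (verit) of_nat_1 of_nat_le_iff one_add_one of_nat_add)

lemma minor_conn_compl:
  assumes "A \<subseteq> E" "B \<subseteq> E" "A \<inter> B = {}" "X \<subseteq> E - (A \<union> B)"
  shows "minor_conn E r A B (E - (A \<union> B) - X) = minor_conn E r A B X"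
proof -
  have "(E - (A \<union> B) - X) \<union> A = E - B - X" "E - B - (E - (A \<union> B) - X) = X \<union> A" using assms by auto
  then show ?thesis unfolding minor_conn_def by simp
qed

lemma minor_conn_delete_bounds:
  assumes "A \<subseteq> E" "B \<subseteq> E" "A \<inter> B = {}" "e \<in> E - (A \<union> B)" "X \<subseteq> E - (A \<union> B)"
  shows "minor_conn E r A (insert e B) (X - {e}) \<le> minor_conn E r A B X
    \<and> minor_conn E r A B X \<le> minor_conn E r A (insert e B) (X - {e}) + 1"
proof (cases "e \<in> X")
  case True
  have minus_e: "E - insert e B - (X - {e}) = E - B - X" using True by auto
  have parts: "(X \<union> A) \<union> (E - B - {e}) = E - B" "(X \<union> A) \<inter> (E - B - {e}) = (X - {e}) \<union> A"
    using assms True by auto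
  have "r ((X \<union> A) \<union> (E - B - {e})) + r ((X \<union> A) \<inter> (E - B - {e})) \<le> r (X \<union> A) + r (E - B - {e})"
    using rank_submod[of "X \<union> A" "E - B - {e}"] assms by auto
  then have submod: "r (E - B) + r ((X - {e}) \<union> A) \<le> r (X \<union> A) + r (E - B - {e})" using parts by simp
  have "X \<union> A = insert e ((X - {e}) \<union> A)" using True by auto
  moreover have "(X - {e}) \<union> A \<subseteq> E" using assms by auto
  ultimately have insert_bound: "r (X \<union> A) \<le> r ((X - {e}) \<union> A) + 1"
    using rank_insert_le[of "(X - {e}) \<union> A" e] assms by simp
  have mono_bound: "r (E - B - {e}) \<le> r (E - B)" using rank_mono[of "E - B - {e}" "E - B"] by auto
  have "E - insert e B = E - B - {e}" by auto
  then show ?thesis unfolding minor_conn_def minus_e using submod insert_bound mono_bound by simp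
next
  case False
  have minus_e: "E - insert e B - (X - {e}) = E - B - X - {e}" "X - {e} = X" using False by auto
  have parts: "(E - B - X) \<union> (E - B - {e}) = E - B" "(E - B - X) \<inter> (E - B - {e}) = E - B - X - {e}"
    using assms False by auto
  have "r ((E - B - X) \<union> (E - B - {e})) + r ((E - B - X) \<inter> (E - B - {e})) \<le> r (E - B - X) + r (E - B - {e})"
    using rank_submod[of "E - B - X" "E - B - {e}"] assms by auto
  then have submod: "r (E - B) + r (E - B - X - {e}) \<le> r (E - B - X) + r (E - B - {e})" using parts by simp
  have "E - B - X = insert e (E - B - X - {e})" using False assms by auto
  then have insert_bound: "r (E - B - X) \<le> r (E - B - X - {e}) + 1"
    using rank_insert_le[of "E - B - X - {e}" e] assms by auto
  have mono_bound: "r (E - B - {e}) \<le> r (E - B)" using rank_mono[of "E - B - {e}" "E - B"] by auto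
  have "E - insert e B = E - B - {e}" "E - B - {e} - X = E - B - X - {e}" by auto
  then show ?thesis unfolding minor_conn_def minus_e using submod insert_bound mono_bound by simp
qed

lemma minor_conn_contract_bounds:
  assumes "A \<subseteq> E" "B \<subseteq> E" "A \<inter> B = {}" "e \<in> E - (A \<union> B)" "X \<subseteq> E - (A \<union> B)"
  shows "minor_conn E r (insert e A) B (X - {e}) \<le> minor_conn E r A B X
    \<and> minor_conn E r A B X \<le> minor_conn E r (insert e A) B (X - {e}) + 1"
proof (cases "e \<in> X")
  case True
  have minus_e: "X - {e} \<union> insert e A = X \<union> A" "E - B - (X - {e}) = insert e (E - B - X)" using True assms by auto
  have parts: "(insert e A) \<union> (E - B - X) = insert e (E - B - X)" "(insert e A) \<inter> (E - B - X) = A"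
    using assms True by auto
  have "r ((insert e A) \<union> (E - B - X)) + r ((insert e A) \<inter> (E - B - X)) \<le> r (insert e A) + r (E - B - X)"
    using rank_submod[of "insert e A" "E - B - X"] assms by auto
  then have submod: "r (insert e (E - B - X)) + r A \<le> r (insert e A) + r (E - B - X)" using parts by simp
  have insert_bound: "r (insert e A) \<le> r A + 1" using rank_insert_le[of A e] assms by auto
  have mono_bound: "r (E - B - X) \<le> r (insert e (E - B - X))" using rank_mono[of "E - B - X" "insert e (E - B - X)"] assms by auto
  show ?thesis unfolding minor_conn_def minus_e using submod insert_bound mono_bound by simp
next
  case False
  have minus_e: "X - {e} \<union> insert e A = insert e (X \<union> A)" "X - {e} = X" using False by auto
  have parts: "(X \<union> A) \<union> (insert e A) = insert e (X \<union> A)" "(X \<union> A) \<inter> (insert e A) = A"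
    using assms False by auto
  have "r ((X \<union> A) \<union> (insert e A)) + r ((X \<union> A) \<inter> (insert e A)) \<le> r (X \<union> A) + r (insert e A)"
    using rank_submod[of "X \<union> A" "insert e A"] assms by auto
  then have submod: "r (insert e (X \<union> A)) + r A \<le> r (X \<union> A) + r (insert e A)" using parts by simp
  have insert_bound: "r (insert e A) \<le> r A + 1" using rank_insert_le[of A e] assms by auto
  have mono_bound: "r (X \<union> A) \<le> r (insert e (X \<union> A))" using rank_mono[of "X \<union> A" "insert e (X \<union> A)"] assms by auto
  show ?thesis unfolding minor_conn_def minus_e using submod insert_bound mono_bound by simp
qed

end

locale restoration_setting = rank_matroid +
  fixes \<theta> :: nat and T :: "'a set set" and C D :: "'a set"
  assumes three_conn: "three_connected E r"
    and tangle: "is_tangle E r \<theta> T"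
    and C_subset: "C \<subseteq> E" and D_subset: "D \<subseteq> E" and C_D_disjoint: "C \<inter> D = {}"
    and Z_tangle_indep: "tangle_indep E r \<theta> T (C \<union> D)"
    and N_3conn: "minor_3conn E r C D"
begin

abbreviation "Z \<equiv> C \<union> D"
abbreviation "F \<equiv> E - (C \<union> D)"

text \<open>\<open>conn S\<close> is the connectivity function of \<open>M/(C - S)\(D - S)\<close>, whose ground set is
  \<open>F \<union> S\<close>; \<open>connM\<close> is that of \<open>M\<close> itself.\<close>

abbreviation "conn S X \<equiv> minor_conn E r (C - S) (D - S) X"
abbreviation "connM X \<equiv> minor_conn E r {} {} X"

lemma Z_subset: "Z \<subseteq> E"
  using C_subset D_subset by auto

lemma finite_Z: "finite Z"
  using Z_subset finite_ground finite_subset by blast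

lemma finite_F: "finite F"
  using finite_ground by simp

lemma ground_minor: "S \<subseteq> Z \<Longrightarrow> E - ((C - S) \<union> (D - S)) = F \<union> S"
  using C_subset D_subset by auto

lemma minor_3conn_S_iff:
  assumes "S \<subseteq> Z"
  shows "minor_3conn E r (C - S) (D - S) \<longleftrightarrow> (\<forall>X. X \<subseteq> F \<union> S \<longrightarrow>
     (card X \<ge> 1 \<and> card (F \<union> S - X) \<ge> 1 \<longrightarrow> conn S X \<ge> 1) \<and>
     (card X \<ge> 2 \<and> card (F \<union> S - X) \<ge> 2 \<longrightarrow> conn S X \<ge> 2))"
  using minor_3conn_iff_minor_conn[of "C - S" "D - S"] C_subset D_subset C_D_disjoint ground_minor[OF assms]
  by auto

lemma conn_compl:
  assumes "S \<subseteq> Z" "X \<subseteq> F \<union> S"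
  shows "conn S (F \<union> S - X) = conn S X"
proof -
  have ground: "E - ((C - S) \<union> (D - S)) = F \<union> S" using ground_minor assms by simp
  have "minor_conn E r (C - S) (D - S) (E - ((C - S) \<union> (D - S)) - X) = conn S X"
    using minor_conn_compl[of "C - S" "D - S" X] C_subset D_subset C_D_disjoint ground assms by auto
  then show ?thesis by (simp only: ground)
qed

lemma minor_3conn_M: "minor_3conn E r {} {}"
proof -
  have "minor_rank r {} = r" unfolding minor_rank_def by (auto simp: rank_empty)
  then show ?thesis unfolding minor_3conn_def minor_ground_def using three_conn by simp
qed

lemma conn_restore_bounds:
  assumes S: "S \<subseteq> Z" and R: "R \<subseteq> S" and X: "X \<subseteq> F \<union> S"
  shows "conn (S - R) (X - R) \<le> conn S X \<and> conn S X \<le> conn (S - R) (X - R) + int (card R)"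
proof -
  have "finite R" using R S finite_Z by (meson finite_subset subset_trans)
  then show ?thesis using R
  proof (induction R)
    case (insert e R)
    let ?S = "S - R" let ?A = "C - ?S" let ?B = "D - ?S" let ?X = "X - R"
    have IH: "conn ?S ?X \<le> conn S X \<and> conn S X \<le> conn ?S ?X + int (card R)" using insert by auto
    have eS: "e \<in> ?S" using insert by auto
    have hyps: "?A \<subseteq> E" "?B \<subseteq> E" "?A \<inter> ?B = {}" "e \<in> E - (?A \<union> ?B)" "?X \<subseteq> E - (?A \<union> ?B)"
      using C_subset D_subset C_D_disjoint eS X S insert by auto
    have step: "conn (?S - {e}) (?X - {e}) \<le> conn ?S ?X \<and> conn ?S ?X \<le> conn (?S - {e}) (?X - {e}) + 1"
    proof (cases "e \<in> C")
      case True
      then have "C - (?S - {e}) = insert e ?A" "D - (?S - {e}) = ?B" using C_D_disjoint by auto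
      then show ?thesis using minor_conn_contract_bounds[OF hyps] by simp
    next
      case False
      then have "e \<in> D" using eS S by auto
      then have "C - (?S - {e}) = ?A" "D - (?S - {e}) = insert e ?B" using False by auto
      then show ?thesis using minor_conn_delete_bounds[OF hyps] by simp
    qed
    have "S - insert e R = ?S - {e}" "X - insert e R = ?X - {e}" by auto
    moreover have "card (insert e R) = card R + 1" using insert by simp
    ultimately show ?case using IH step by (simp only:) linarith
  qed simp
qed

lemma conn_mono:
  assumes "S' \<subseteq> S" "S \<subseteq> Z" "X \<subseteq> F \<union> S'"
  shows "conn S' X \<le> conn S X"
proof -
  have "S - (S - S') = S'" "X - (S - S') = X" "X \<subseteq> F \<union> S" using assms by auto
  then show ?thesis using conn_restore_bounds[of S "S - S'" X] assms(2) by auto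
qed

lemma conn_N_le:
  assumes "S \<subseteq> Z" "X \<subseteq> F \<union> S"
  shows "minor_conn E r C D (X \<inter> F) \<le> conn S X"
proof -
  have "S - S = {}" "X - S = X \<inter> F" using assms by auto
  then show ?thesis using conn_restore_bounds[of S S X] assms by simp
qed

lemma connM_conn_fun: "X \<subseteq> E \<Longrightarrow> connM X = int (conn_fun E r X)"
  using conn_fun_minor[of "{}" "{}" X] unfolding minor_rank_def by (simp add: rank_empty)

lemma connM_eq: "connM X = int (r X) + int (r (E - X)) - int (r E)"
  unfolding minor_conn_def by (simp add: rank_empty)

lemma conn_fun_le_card: "X \<subseteq> E \<Longrightarrow> conn_fun E r X \<le> card X"
  unfolding conn_fun_def using rank_le_card[of X] rank_mono[of "E - X" E] by auto

section \<open>Consequences of tangle-independence\<close>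

lemma tangle_subset: "Y \<in> T \<Longrightarrow> Y \<subseteq> E"
  using tangle unfolding is_tangle_def by auto

lemma tangle_conn_less: "Y \<in> T \<Longrightarrow> conn_fun E r Y < \<theta>"
  and tangle_mem_or_compl: "X \<subseteq> E \<Longrightarrow> conn_fun E r X < \<theta> \<Longrightarrow> X \<in> T \<or> E - X \<in> T"
  and tangle_no_triple_cover: "X \<in> T \<Longrightarrow> Y \<in> T \<Longrightarrow> W \<in> T \<Longrightarrow> X \<union> Y \<union> W \<noteq> E"
  and tangle_co_singleton: "e \<in> E \<Longrightarrow> E - {e} \<notin> T"
  using tangle unfolding is_tangle_def by simp_all

lemma small_in_tangle:
  assumes "U \<subseteq> E" "card U < \<theta>"
  shows "U \<in> T"
proof -
  have "finite U" using assms finite_ground finite_subset by blast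
  then show ?thesis using assms
  proof (induction U)
    case empty
    have "conn_fun E r {} < \<theta>" using empty conn_fun_le_card[of "{}"] by simp
    moreover have "E \<notin> T" using tangle_no_triple_cover[of E E E] by auto
    ultimately show ?case using tangle_mem_or_compl[of "{}"] by simp
  next
    case (insert e U)
    have U: "U \<in> T" using insert by simp
    have "conn_fun E r {e} \<le> 1" using conn_fun_le_card[of "{e}"] insert by simp
    then have "conn_fun E r {e} < \<theta>" using insert by simp
    then have "{e} \<in> T" using tangle_mem_or_compl[of "{e}"] tangle_co_singleton[of e] insert by auto
    moreover have "conn_fun E r (insert e U) < \<theta>" using conn_fun_le_card[of "insert e U"] insert by simp
    ultimately show ?case
      using tangle_mem_or_compl[of "insert e U"] tangle_no_triple_cover[of U "{e}" "E - insert e U"] U insert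
      by auto
  qed
qed

lemma card_Z_le_conn_fun:
  assumes "Z \<subseteq> Y" "Y \<in> T"
  shows "card Z \<le> conn_fun E r Y"
proof -
  have "T \<subseteq> Pow E" using tangle_subset by auto
  then have "finite T" using finite_ground by (meson finite_Pow_iff finite_subset)
  then have "tangle_rank E r \<theta> T Z \<le> conn_fun E r Y"
    unfolding tangle_rank_def using assms by (auto intro: Min_le)
  then show ?thesis using Z_tangle_indep unfolding tangle_indep_def by simp
qed

lemma card_Z_le_order: "card Z \<le> \<theta>"
proof (cases "\<exists>Y\<in>T. Z \<subseteq> Y")
  case True
  then show ?thesis using card_Z_le_conn_fun tangle_conn_less by (meson le_trans less_imp_le)
next
  case False
  then have "tangle_rank E r \<theta> T Z = \<theta>" unfolding tangle_rank_def by (simp only: if_False)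
  then show ?thesis using Z_tangle_indep unfolding tangle_indep_def by simp
qed

lemma compl_in_tangle:
  assumes "Z \<subseteq> W" "W \<subseteq> E" "connM W < int (card Z)"
  shows "E - W \<in> T"
proof -
  have low: "conn_fun E r W < card Z" using connM_conn_fun[OF assms(2)] assms(3) by simp
  have "W \<notin> T"
  proof
    assume "W \<in> T"
    then have "card Z \<le> conn_fun E r W" using card_Z_le_conn_fun assms(1) by simp
    then show False using low by simp
  qed
  then show ?thesis using tangle_mem_or_compl[of W] low card_Z_le_order assms by auto
qed

lemma connM_ge_card_Z:
  assumes "Z \<subseteq> W" "W \<subseteq> P \<union> Q" "P \<subseteq> E" "Q \<subseteq> E" "card P < \<theta>" "card Q < \<theta>"
  shows "connM W \<ge> int (card Z)"
proof (rule ccontr)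
  assume "\<not> connM W \<ge> int (card Z)"
  moreover have "W \<subseteq> E" using assms by auto
  ultimately have "E - W \<in> T" using compl_in_tangle[OF assms(1)] by simp
  moreover have "P \<in> T" "Q \<in> T" using small_in_tangle assms by auto
  ultimately show False using tangle_no_triple_cover[of P Q "E - W"] assms by auto
qed

lemma connM_Z_ge_card: "connM Z \<ge> int (card Z)"
proof -
  consider "card Z = 0" | "card Z = 1" | "card Z \<ge> 2" by linarith
  then show ?thesis
  proof cases
    case 1
    then show ?thesis using finite_Z unfolding minor_conn_def by (simp add: rank_empty)
  next
    case 2
    then obtain z where z: "Z = {z}" using card_1_singletonE by blast
    show ?thesis
    proof (rule ccontr)
      assume "\<not> ?thesis"
      then have "E - Z \<in> T" using compl_in_tangle[of Z] Z_subset by auto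
      then show False using tangle_co_singleton[of z] z Z_subset by auto
    qed
  next
    case 3
    then have "Z \<noteq> {}" by auto
    then obtain z where z: "z \<in> Z" by blast
    have "card (Z - {z}) < \<theta>" using card_Z_le_order z finite_Z 3 by (simp add: card_Diff_singleton)
    moreover have "card {z} < \<theta>" using card_Z_le_order 3 by simp
    ultimately show ?thesis using connM_ge_card_Z[of Z "Z - {z}" "{z}"] Z_subset z by auto
  qed
qed

lemma rank_Z: "r Z = card Z" and rank_F: "r F = r E"
proof -
  have "r Z \<le> card Z" using rank_le_card Z_subset by simp
  moreover have "r F \<le> r E" using rank_mono[of F E] by auto
  moreover have "connM Z = int (r Z) + int (r F) - int (r E)" using connM_eq by simp
  ultimately show "r Z = card Z" "r F = r E" using connM_Z_ge_card by linarith+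
qed

lemma rank_subset_Z: "Y \<subseteq> Z \<Longrightarrow> r Y = card Y"
proof -
  assume Y: "Y \<subseteq> Z"
  have "Y \<union> (Z - Y) = Z" using Y by auto
  then have "r Z \<le> r Y + card (Z - Y)" using rank_union_le_card[of Y "Z - Y"] Y Z_subset by auto
  moreover have "card Z = card Y + card (Z - Y)" using Y finite_Z
    by (metis card_Diff_subset finite_subset le_add_diff_inverse card_mono)
  moreover have "r Y \<le> card Y" using rank_le_card Y Z_subset by auto
  ultimately show ?thesis using rank_Z by linarith
qed

lemma rank_spanning: "F \<subseteq> Y \<Longrightarrow> Y \<subseteq> E \<Longrightarrow> r Y = r E"
  using rank_mono[of F Y] rank_mono[of Y E] rank_F by auto

lemma card_Z_le_card_F: "card Z \<le> card F"
  using rank_Z rank_F rank_mono[OF Z_subset] rank_le_card[of F] by auto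

lemma connM_insert_Z_ge_card:
  assumes "card Z \<ge> 3" "x \<in> F"
  shows "connM (insert x Z) \<ge> int (card Z)"
proof -
  have "Z \<noteq> {}" using assms by auto
  then obtain z where z: "z \<in> Z" by blast
  have "card {z, x} \<le> 2" by (cases "z = x") auto
  then have "card (Z - {z}) < \<theta>" "card {z, x} < \<theta>"
    using card_Z_le_order z finite_Z assms by auto
  then show ?thesis using connM_ge_card_Z[of "insert x Z" "Z - {z}" "{z,x}"] Z_subset z assms by auto
qed

lemma card_F_ge_4:
  assumes "card Z \<ge> 3"
  shows "card F \<ge> 4"
proof (rule ccontr)
  assume small: "\<not> card F \<ge> 4"
  have "Z \<noteq> {}" using assms by auto
  then obtain z where z: "z \<in> Z" by blast
  have order: "\<theta> \<ge> 3" using card_Z_le_order assms by simp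
  have "card (Z - {z}) < \<theta>" using card_Z_le_order z finite_Z assms by auto
  then have P: "Z - {z} \<in> T" using small_in_tangle[of "Z - {z}"] Z_subset by auto
  show False
  proof (cases "F = {}")
    case True
    have "{z} \<in> T" using small_in_tangle[of "{z}"] order z Z_subset by auto
    moreover have "(Z - {z}) \<union> {z} \<union> {z} = E" using True z Z_subset by auto
    ultimately show False using tangle_no_triple_cover P by metis
  next
    case False
    then obtain f where f: "f \<in> F" by blast
    have "card {z, f} \<le> 2" by (cases "z = f") auto
    then have Q: "{z, f} \<in> T" using small_in_tangle[of "{z,f}"] order z f Z_subset by auto
    have "card (F - {f}) \<le> 2" using small f finite_F by (simp add: card_Diff_singleton)
    then have R: "F - {f} \<in> T" using small_in_tangle[of "F - {f}"] order by auto
    have "(Z - {z}) \<union> {z, f} \<union> (F - {f}) = E" using z f Z_subset by auto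
    then show False using tangle_no_triple_cover P Q R by metis
  qed
qed

text \<open>With \<open>C - S\<close> independent and \<open>E - (D - S)\<close> spanning, \<open>conn S\<close> has this closed form;
  it is stated with free right-hand sides so that it applies by \<open>rule\<close>.\<close>

lemma conn_eqI:
  assumes "S \<subseteq> Z" "X \<union> (C - S) = P" "E - (D - S) - X = Q" "card (C - S) = k"
  shows "conn S X = int (r P) + int (r Q) - int k - int (r E)"
proof -
  have "r (C - S) = card (C - S)" using rank_subset_Z[of "C - S"] by auto
  moreover have "r (E - (D - S)) = r E" using rank_spanning[of "E - (D - S)"] by auto
  ultimately show ?thesis using assms unfolding minor_conn_def by simp
qed

lemma N_3conn_iff: "minor_3conn E r C D \<longleftrightarrow> (\<forall>X. X \<subseteq> F \<longrightarrow>
     (card X \<ge> 1 \<and> card (F - X) \<ge> 1 \<longrightarrow> minor_conn E r C D X \<ge> 1) \<and>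
     (card X \<ge> 2 \<and> card (F - X) \<ge> 2 \<longrightarrow> minor_conn E r C D X \<ge> 2))"
  using minor_3conn_iff_minor_conn[OF C_subset D_subset C_D_disjoint] by simp

lemma N_conn_eq:
  "minor_conn E r C D X = int (r (X \<union> C)) + int (r (E - D - X)) - int (card C) - int (r E)"
  using conn_eqI[of "{}" X] by simp

lemma N_no_loop_coloop:
  assumes "x \<in> F" "card F \<ge> 2"
  shows "r (insert x C) = card C + 1" "r (E - D - {x}) = r E"
proof -
  have "card (F - {x}) \<ge> 1" using assms finite_F by (simp add: card_Diff_singleton)
  then have "minor_conn E r C D {x} \<ge> 1" using N_3conn N_3conn_iff assms by auto
  moreover have "r (insert x C) \<le> r C + 1" using rank_insert_le[of C x] C_subset assms by auto
  moreover have "r (E - D - {x}) \<le> r E" using rank_mono[of "E - D - {x}" E] by auto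
  ultimately show "r (insert x C) = card C + 1" "r (E - D - {x}) = r E"
    using rank_subset_Z[of C] N_conn_eq[of "{x}"] by simp_all
qed

lemma N_pair_conn:
  assumes "x \<in> F" "y \<in> F" "x \<noteq> y" "card F \<ge> 4"
  shows "int (r (C \<union> {x, y})) + int (r (E - D - {x, y})) \<ge> int (card C) + int (r E) + 2"
proof -
  have "card (F - {x, y}) \<ge> 2" "card {x, y} = 2" using assms finite_F by (auto simp: card_Diff_subset)
  then have "minor_conn E r C D {x, y} \<ge> 2" using N_3conn N_3conn_iff assms by auto
  then show ?thesis using N_conn_eq[of "{x,y}"] by (simp add: Un_commute)
qed

section \<open>A pair criterion for 3-connectivity\<close>

lemma connM_Z_union_le:
  assumes S: "S \<subseteq> Z" and X: "X \<subseteq> F \<union> S"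
  shows "connM (Z \<union> (X \<inter> F)) \<le> conn S X + int (card Z) - int (card (X \<inter> S))"
proof -
  let ?Y = "X \<union> (Z - S)"
  have ground: "F \<union> Z = E" using Z_subset by auto
  have emptied: "C - Z = {}" "D - Z = {}" by auto
  have "conn Z ?Y \<le> conn (Z - (Z - S)) (?Y - (Z - S)) + int (card (Z - S))"
    using conn_restore_bounds[of Z "Z - S" ?Y] S X ground by auto
  moreover have "Z - (Z - S) = S" "?Y - (Z - S) = X" using S X by auto
  ultimately have restore: "connM ?Y \<le> conn S X + int (card (Z - S))" by (simp only: emptied)
  have SX: "S - X \<subseteq> Z" and Y: "?Y \<union> (S - X) \<subseteq> F \<union> Z" "?Y \<subseteq> F \<union> Z" using S X by auto
  note conn_restore_bounds[OF subset_refl SX Y(1)] conn_restore_bounds[OF subset_refl SX Y(2)]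
  moreover have "?Y \<union> (S - X) = Z \<union> (X \<inter> F)" "(?Y \<union> (S - X)) - (S - X) = ?Y" "?Y - (S - X) = ?Y"
    using S X by auto
  ultimately have add: "connM (Z \<union> (X \<inter> F)) \<le> connM ?Y + int (card (S - X))"
    by (simp only: emptied) simp
  have fS: "finite S" using S finite_Z finite_subset by auto
  have "card Z = card (Z - S) + card S" using S finite_Z
    by (metis card_Diff_subset finite_subset le_add_diff_inverse2 card_mono)
  moreover have "S = (S - X) \<union> (X \<inter> S)" "(S - X) \<inter> (X \<inter> S) = {}" by auto
  then have "card S = card (S - X) + card (X \<inter> S)" using fS by (metis card_Un_disjoint finite_Diff finite_Int)
  ultimately show ?thesis using add restore by simp
qed

lemma conn_ge_card_S_part:
  assumes S: "S \<subseteq> Z" "S \<noteq> Z" and X: "X \<subseteq> F \<union> S" and XF: "card (X \<inter> F) \<le> 1"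
  shows "int (card (X \<inter> S)) \<le> conn S X \<or> (X \<inter> F \<noteq> {} \<and> card (X \<inter> S) \<le> 1)"
proof (cases "X \<inter> F = {}")
  case True
  then show ?thesis using connM_Z_union_le[OF S(1) X] connM_Z_ge_card by simp
next
  case False
  then obtain x where x: "X \<inter> F = {x}" using XF
    by (metis card_0_eq card_1_singletonE finite_F finite_Int le_neq_implies_less less_one)
  show ?thesis
  proof (cases "card Z \<ge> 3")
    case True
    moreover have "x \<in> F" "Z \<union> (X \<inter> F) = insert x Z" using x by auto
    ultimately have "connM (Z \<union> (X \<inter> F)) \<ge> int (card Z)"
      using connM_insert_Z_ge_card[of x] by simp
    then show ?thesis using connM_Z_union_le[OF S(1) X] by simp
  next
    case False
    have "card S < card Z" using S finite_Z by (simp add: psubset_card_mono)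
    moreover have "card (X \<inter> S) \<le> card S" using S finite_Z finite_subset by (auto intro: card_mono)
    ultimately have "card (X \<inter> S) \<le> 1" using False by simp
    then show ?thesis using x by simp
  qed
qed

text \<open>The heart of the criterion below: by the tangle bound, a side of a 2-separation of
  \<open>M/(C - S)\(D - S)\<close> meeting \<open>F\<close> in fewer than two elements is a pair \<open>{s, x}\<close>
  with \<open>s \<in> S\<close> and \<open>x \<in> F\<close>.\<close>

lemma card_lt_of_conn_lt:
  assumes S: "S \<subseteq> Z" "S \<noteq> Z" and pairs: "\<forall>s\<in>S. \<forall>x\<in>F. conn S {s, x} \<ge> 2"
    and X: "X \<subseteq> F \<union> S" and k: "k = 1 \<or> k = 2" "conn S X < int k" "card (X \<inter> F) < k"
  shows "card X < k"
proof -
  have "X = (X \<inter> F) \<union> (X \<inter> S)" "(X \<inter> F) \<inter> (X \<inter> S) = {}" using S X by auto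
  moreover have "finite (X \<inter> F)" "finite (X \<inter> S)" using finite_F S finite_Z finite_subset by auto
  ultimately have split: "card X = card (X \<inter> F) + card (X \<inter> S)" by (metis card_Un_disjoint)
  have bound: "int (card (X \<inter> S)) \<le> conn S X \<or> (X \<inter> F \<noteq> {} \<and> card (X \<inter> S) \<le> 1)"
    using conn_ge_card_S_part[OF S X] k by auto
  have "card X \<le> 1"
  proof (rule ccontr)
    assume "\<not> card X \<le> 1"
    then have "card (X \<inter> F) = 1" "card (X \<inter> S) = 1" using split bound k by linarith+
    then obtain x s where "X \<inter> F = {x}" "X \<inter> S = {s}" by (meson card_1_singletonE)
    then have "X = {s, x}" "x \<in> F" "s \<in> S" using X by auto
    then have "X = {s, x}" "conn S {s, x} \<ge> 2" using pairs by auto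
    then show False using k by simp
  qed
  show ?thesis
  proof (cases "k = 2")
    case False
    then have "X \<inter> F = {}" using k finite_F by auto
    then show ?thesis using k bound split False by auto
  qed (use \<open>card X \<le> 1\<close> in simp)
qed

lemma pair_conn_ge_2:
  assumes S: "S \<subseteq> Z" "minor_3conn E r (C - S) (D - S)" and "s \<in> S" "x \<in> F" "card F + card S \<ge> 4"
  shows "conn S {s, x} \<ge> 2"
proof -
  have sx: "s \<noteq> x" using assms by auto
  have "finite (F \<union> S)" using finite_F finite_Z S finite_subset by auto
  moreover have "card (F \<union> S) = card F + card S" using S finite_F finite_Z finite_subset
    by (metis Diff_disjoint card_Un_disjoint disjoint_iff subsetD)
  ultimately have "card (F \<union> S - {s, x}) \<ge> 2" using assms sx by (simp add: card_Diff_subset)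
  moreover have "card {s, x} = 2" using sx by simp
  ultimately show ?thesis using minor_3conn_S_iff[of S] assms by auto
qed

text \<open>Conversely, 3-connectivity of \<open>M/(C - S)\(D - S)\<close> is decided on the pairs \<open>{s, x}\<close>:
  a low-connectivity set meets \<open>F\<close> in a low-connectivity set of the 3-connected \<open>N\<close>, so it or
  its complement has fewer than two elements in \<open>F\<close>.\<close>

lemma minor_3conn_of_pair_conn:
  assumes S: "S \<subseteq> Z" and pairs: "\<forall>s\<in>S. \<forall>x\<in>F. conn S {s, x} \<ge> 2"
  shows "minor_3conn E r (C - S) (D - S)"
proof (cases "S = Z")
  case True
  then have "C - S = {}" "D - S = {}" by auto
  then show ?thesis using minor_3conn_M by (simp only:)
next
  case S_proper: False
  have conn_ge: "conn S X \<ge> int k"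
    if X: "X \<subseteq> F \<union> S" and k: "k = 1 \<or> k = 2" "card X \<ge> k" "card (F \<union> S - X) \<ge> k" for X k
  proof (rule ccontr)
    assume low: "\<not> conn S X \<ge> int k"
    then have "minor_conn E r C D (X \<inter> F) < int k" using conn_N_le[OF S X] by simp
    moreover have "F - X \<inter> F = (F \<union> S - X) \<inter> F" by auto
    ultimately have "card (X \<inter> F) < k \<or> card ((F \<union> S - X) \<inter> F) < k"
      using N_3conn[unfolded N_3conn_iff, rule_format, of "X \<inter> F"] k(1) by fastforce
    then show False
    proof
      assume "card (X \<inter> F) < k"
      then show False using card_lt_of_conn_lt[OF S S_proper pairs X k(1)] low k by simp
    next
      assume "card ((F \<union> S - X) \<inter> F) < k"
      moreover have "conn S (F \<union> S - X) = conn S X" using conn_compl[OF S X] .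
      ultimately show False using card_lt_of_conn_lt[OF S S_proper pairs _ k(1), of "F \<union> S - X"] low k
        by simp
    qed
  qed
  have "\<forall>X. X \<subseteq> F \<union> S \<longrightarrow>
     (card X \<ge> 1 \<and> card (F \<union> S - X) \<ge> 1 \<longrightarrow> conn S X \<ge> 1) \<and>
     (card X \<ge> 2 \<and> card (F \<union> S - X) \<ge> 2 \<longrightarrow> conn S X \<ge> 2)"
    using conn_ge[of _ 1] conn_ge[of _ 2] by simp
  then show ?thesis using minor_3conn_S_iff[OF S] by simp
qed

section \<open>The restoration graph\<close>

lemma restoration_adj_iff:
  "restoration_adj E r C D v u \<longleftrightarrow>
    ((v \<in> C \<and> u \<in> D) \<or> (v \<in> D \<and> u \<in> C)) \<and> minor_3conn E r (C - {v, u}) (D - {v, u})"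
proof (cases "v \<in> C \<and> u \<in> D")
  case True
  then have "C - {v, u} = C - {v}" "D - {v, u} = D - {u}" "u \<notin> C" using C_D_disjoint by auto
  then show ?thesis using True unfolding restoration_adj_def by simp
next
  case not_CD: False
  show ?thesis
  proof (cases "v \<in> D \<and> u \<in> C")
    case True
    then have "C - {v, u} = C - {u}" "D - {v, u} = D - {v}" "v \<notin> C" using C_D_disjoint by auto
    then show ?thesis using True not_CD unfolding restoration_adj_def by simp
  next
    case False
    then show ?thesis using not_CD unfolding restoration_adj_def by blast
  qed
qed

text \<open>A privileged \<open>s\<close> or an edge \<open>su\<close> inside \<open>S\<close> gives a 3-connected minor on
  \<open>F \<union> {s}\<close> or \<open>F \<union> {s, u}\<close>, and the connectivity of a pair only grows with \<open>S\<close>.\<close>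

lemma pair_conn_of_no_isolated:
  assumes S: "S \<subseteq> Z" and no_isolated: "no_isolated_nonpriv E r C D S"
    and "card F \<ge> 4" and s: "s \<in> S" and x: "x \<in> F"
  shows "conn S {s, x} \<ge> 2"
proof -
  obtain S' where S': "s \<in> S'" "S' \<subseteq> S" "minor_3conn E r (C - S') (D - S')"
  proof (cases "privileged E r C D s")
    case True
    then show ?thesis using that[of "{s}"] s unfolding privileged_def by auto
  next
    case False
    then obtain u where "u \<in> S" "restoration_adj E r C D s u"
      using no_isolated s unfolding no_isolated_nonpriv_def by blast
    then show ?thesis using that[of "{s, u}"] s restoration_adj_iff by auto
  qed
  then have "conn S' {s, x} \<ge> 2"
    using pair_conn_ge_2[of S' s x] \<open>card F \<ge> 4\<close> S x by auto
  moreover have "conn S' {s, x} \<le> conn S {s, x}" using conn_mono[of S' S "{s, x}"] S' S x by auto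
  ultimately show ?thesis by simp
qed

lemma minor_3conn_of_no_isolated:
  assumes S: "S \<subseteq> Z" and no_isolated: "no_isolated_nonpriv E r C D S"
  shows "minor_3conn E r (C - S) (D - S)"
proof -
  have "finite S" using S finite_Z finite_subset by auto
  moreover have "card S = 0 \<or> card S = 1 \<or> card S \<ge> 2" by linarith
  ultimately have "S = {} \<or> S = Z \<or> card S = 1 \<or> (card S \<ge> 2 \<and> S \<noteq> Z)" by auto
  then consider "S = {}" | "S = Z" | s where "S = {s}" | "card S \<ge> 2" "S \<noteq> Z"
    by (metis card_1_singletonE)
  then show ?thesis
  proof cases
    case 1
    then show ?thesis using N_3conn by simp
  next
    case 2
    then have "C - S = {}" "D - S = {}" by auto
    then show ?thesis using minor_3conn_M by (simp only:)
  next
    case (3 s)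
    have "privileged E r C D s"
    proof (rule ccontr)
      assume "\<not> privileged E r C D s"
      then obtain u where "u \<in> S" "restoration_adj E r C D s u"
        using no_isolated 3 unfolding no_isolated_nonpriv_def by blast
      then show False using restoration_adj_iff C_D_disjoint 3 by auto
    qed
    then show ?thesis using 3 unfolding privileged_def by simp
  next
    case 4
    have "card S < card Z" using S 4 finite_Z by (simp add: psubset_card_mono)
    then have "card F \<ge> 4" using card_F_ge_4 4 by simp
    then have "\<forall>s\<in>S. \<forall>x\<in>F. conn S {s, x} \<ge> 2"
      using pair_conn_of_no_isolated S no_isolated by auto
    then show ?thesis using minor_3conn_of_pair_conn S by simp
  qed
qed

lemma card_Diff_singleton_Z:
  assumes "v \<in> Y" "Y \<subseteq> Z"
  shows "card (Y - {v}) = card Y - 1" "card Y \<ge> 1"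
proof -
  have "finite Y" using finite_subset[OF assms(2) finite_Z] .
  then show "card (Y - {v}) = card Y - 1" "card Y \<ge> 1"
    using assms(1) card_gt_0_iff[of Y] by (auto simp: card_Diff_singleton)
qed

text \<open>A non-privileged \<open>v \<in> C\<close> has some \<open>x\<^sub>0 \<in> F\<close> with \<open>conn {v} {v, x\<^sub>0} < 2\<close>, i.e. with
  \<open>H = E - D - {v, x\<^sub>0}\<close> a hyperplane of \<open>M\<close>. Its neighbour is an element \<open>u \<in> S \<inter> D\<close>
  outside the closure of \<open>H\<close>; the case \<open>v \<in> D\<close> is dual, with \<open>C \<union> {v, x\<^sub>0}\<close> of rank
  \<open>|C| + 1\<close> in place of \<open>H\<close>.\<close>

lemma contract_hyperplane:
  assumes v: "v \<in> C" and x0: "x0 \<in> F" "card F \<ge> 2" and low: "conn {v} {v, x0} < 2"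
  shows "r (E - D - {v, x0}) + 1 = r E"
proof -
  let ?H = "E - D - {v, x0}"
  have N: "r (insert x0 C) = card C + 1" "r (E - D - {x0}) = r E" using N_no_loop_coloop x0 by auto
  have "card (C - {v}) = card C - 1" "card C \<ge> 1" using card_Diff_singleton_Z v by auto
  moreover have "conn {v} {v, x0} = int (r (insert x0 C)) + int (r ?H) - int (card C - 1) - int (r E)"
    by (rule conn_eqI) (use v x0 C_D_disjoint in \<open>auto simp: calculation\<close>)
  ultimately have "int (r ?H) \<le> int (r E) - 1" using low N by linarith
  moreover have "insert v ?H = E - D - {x0}" using v x0 C_subset C_D_disjoint by auto
  then have "r (E - D - {x0}) \<le> r ?H + 1" using rank_insert_le[of ?H v] v C_subset by auto
  ultimately show ?thesis using N by linarith
qed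

lemma contract_exists_restoring:
  assumes S: "S \<subseteq> Z" and v: "v \<in> S" "v \<in> C" and x0: "x0 \<in> F"
    and hyperplane: "r (E - D - {v, x0}) + 1 = r E" and high: "conn S {v, x0} \<ge> 2"
  shows "\<exists>u\<in>S \<inter> D. r (insert u (E - D - {v, x0})) = r (E - D - {v, x0}) + 1"
proof -
  let ?H = "E - D - {v, x0}"
  have "\<exists>u\<in>S \<inter> D. r (insert u ?H) \<noteq> r ?H"
  proof (rule ccontr)
    assume "\<not> ?thesis"
    then have closed: "r (?H \<union> (S \<inter> D)) = r ?H"
      using rank_union_eq_of_insert_eq[of "S \<inter> D" ?H] D_subset by auto
    have "r ((C - S) \<union> {v, x0}) \<le> r (C - S) + card {v, x0}"
      using rank_union_le_card[of "C - S" "{v, x0}"] C_subset v x0 by auto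
    moreover have "r (C - S) = card (C - S)" using rank_subset_Z by auto
    moreover have "v \<noteq> x0" using v x0 by auto
    then have "card {v, x0} = 2" by simp
    ultimately have "r ({v, x0} \<union> (C - S)) \<le> card (C - S) + 2" by (simp add: Un_commute)
    moreover have "conn S {v, x0} = int (r ({v, x0} \<union> (C - S))) + int (r (?H \<union> (S \<inter> D)))
        - int (card (C - S)) - int (r E)"
      by (rule conn_eqI) (use v x0 C_D_disjoint S D_subset in auto)
    ultimately show False using closed hyperplane high by linarith
  qed
  then obtain u where u: "u \<in> S \<inter> D" "r (insert u ?H) \<noteq> r ?H" by blast
  moreover have "r ?H \<le> r (insert u ?H)" "r (insert u ?H) \<le> r ?H + 1"
    using rank_mono[of ?H "insert u ?H"] rank_insert_le[of ?H u] u D_subset by auto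
  ultimately show ?thesis by force
qed

lemma contract_restored_pair_v:
  assumes v: "v \<in> C" and u: "u \<in> D" and x0: "x0 \<in> F" and x: "x \<in> F" and F4: "card F \<ge> 4"
    and hyperplane: "r (E - D - {v, x0}) + 1 = r E"
    and u_out: "r (insert u (E - D - {v, x0})) = r (E - D - {v, x0}) + 1"
  shows "conn {v, u} {v, x} \<ge> 2"
proof (rule ccontr)
  let ?H = "E - D - {v, x0}" and ?Hx = "E - D - {v, x}"
  assume low: "\<not> conn {v, u} {v, x} \<ge> 2"
  have N: "r (insert x C) = card C + 1" "r (E - D - {x}) = r E" using N_no_loop_coloop x F4 by auto
  have "card (C - {v}) = card C - 1" "card C \<ge> 1" using card_Diff_singleton_Z v by auto
  moreover have "C - {v, u} = C - {v}" "D - {v, u} = D - {u}" using u v C_D_disjoint by auto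
  moreover have "conn {v, u} {v, x} = int (r (insert x C)) + int (r (insert u ?Hx)) - int (card C - 1) - int (r E)"
    by (rule conn_eqI) (use v u x C_D_disjoint D_subset in \<open>auto simp: calculation\<close>)
  ultimately have low_Hx: "int (r (insert u ?Hx)) \<le> int (r E) - 1" using low N by linarith
  show False
  proof (cases "x = x0")
    case True
    then show False using low_Hx hyperplane u_out by simp
  next
    case False
    text \<open>Two distinct hyperplanes \<open>E - D - {v, x\<^sub>0}\<close>, \<open>E - D - {v, x}\<close> of the spanning set
      \<open>E - D - {v}\<close> meet in a set of corank 2, so \<open>{x, x\<^sub>0}\<close> would be 2-separating in \<open>N\<close>.\<close>
    have "r ?Hx \<le> r (insert u ?Hx)" using rank_mono[of ?Hx "insert u ?Hx"] u D_subset by auto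
    then have Hx: "int (r ?Hx) \<le> int (r E) - 1" using low_Hx by linarith
    have "r (?H \<union> ?Hx) + r (?H \<inter> ?Hx) \<le> r ?H + r ?Hx" using rank_submod[of ?H ?Hx] by auto
    moreover have "?H \<union> ?Hx = E - D - {v}" using False by auto
    moreover have "r (E - D - {v}) = r E" using rank_spanning[of "E - D - {v}"] v by auto
    ultimately have meet: "int (r (?H \<inter> ?Hx)) \<le> int (r E) - 2" using hyperplane Hx by simp
    have "E - D - {x, x0} = insert v (?H \<inter> ?Hx)" using v x x0 C_subset C_D_disjoint by auto
    then have "r (E - D - {x, x0}) \<le> r (?H \<inter> ?Hx) + 1"
      using rank_insert_le[of "?H \<inter> ?Hx" v] v C_subset by auto
    moreover have "r (C \<union> {x, x0}) \<le> r C + card {x, x0}"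
      using rank_union_le_card[of C "{x, x0}"] C_subset x x0 by auto
    moreover have "r C = card C" using rank_subset_Z by auto
    moreover have "card {x, x0} = 2" using False by auto
    ultimately show False using N_pair_conn[of x x0] x x0 False F4 meet by linarith
  qed
qed

lemma contract_restored_pair_u:
  assumes v: "v \<in> C" and u: "u \<in> D" and x0: "x0 \<in> F" and x: "x \<in> F" and Z3: "card Z \<ge> 3"
    and hyperplane: "r (E - D - {v, x0}) + 1 = r E"
    and u_out: "r (insert u (E - D - {v, x0})) = r (E - D - {v, x0}) + 1"
  shows "conn {v, u} {u, x} \<ge> 2"
proof (rule ccontr)
  let ?H = "E - D - {v, x0}" and ?Y = "insert x (C - {v})"
  assume low: "\<not> conn {v, u} {u, x} \<ge> 2"
  have N: "r (insert x C) = card C + 1" "r (E - D - {x}) = r E"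
    using N_no_loop_coloop x card_F_ge_4[OF Z3] by auto
  have YE: "?Y \<subseteq> E" using x C_subset by auto
  have card_C: "card (C - {v}) = card C - 1" "card C \<ge> 1" using card_Diff_singleton_Z v by auto
  moreover have "C - {v, u} = C - {v}" "D - {v, u} = D - {u}" using u v C_D_disjoint by auto
  moreover have "conn {v, u} {u, x} = int (r (insert u ?Y)) + int (r (E - D - {x})) - int (card C - 1) - int (r E)"
    by (rule conn_eqI) (use v u x C_D_disjoint D_subset in \<open>auto simp: calculation\<close>)
  ultimately have low_Y: "r (insert u ?Y) \<le> card C" using low N by linarith
  have "r ?Y \<le> r (C - {v}) + card {x}" using rank_union_le_card[of "C - {v}" "{x}"] C_subset x by auto
  moreover have "r (C - {v}) = card (C - {v})" using rank_subset_Z by auto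
  moreover have "insert v ?Y = insert x C" using v by auto
  then have "r (insert x C) \<le> r ?Y + 1" using rank_insert_le[of ?Y v] YE v C_subset by auto
  ultimately have "r ?Y = card C" using card_C N by simp
  moreover have "r ?Y \<le> r (insert u ?Y)" using rank_mono[of ?Y "insert u ?Y"] YE u D_subset by auto
  ultimately have u_in_cl: "r (insert u ?Y) = r ?Y" using low_Y by simp
  show False
  proof (cases "x = x0")
    case False
    then have "?Y \<subseteq> ?H" using v x x0 C_subset C_D_disjoint by auto
    then have "r (insert u ?H) = r ?H"
      using rank_insert_eq_mono[of ?Y ?H u] u_in_cl u D_subset by auto
    then show False using u_out by simp
  next
    case True
    text \<open>Here \<open>Z \<union> {x\<^sub>0}\<close> would have connectivity below \<open>|Z|\<close>.\<close>
    have "insert x0 Z = insert u ?Y \<union> insert v (D - {u})" using True v u by auto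
    then have "r (insert x0 Z) \<le> r (insert u ?Y) + card (insert v (D - {u}))"
      using rank_union_le_card[of "insert u ?Y" "insert v (D - {u})"] YE u v C_subset D_subset by auto
    moreover have "card (insert v (D - {u})) = card D"
      using card_Diff_singleton_Z[of u D] u v C_D_disjoint finite_Z by (subst card_insert_disjoint) auto
    moreover have "card Z = card C + card D" using C_D_disjoint finite_Z by (simp add: card_Un_disjoint)
    ultimately have "r (insert x0 Z) \<le> card Z" using low_Y by simp
    moreover have "E - insert x0 Z \<subseteq> ?H" using v by auto
    then have "r (E - insert x0 Z) \<le> r ?H" using rank_mono[of "E - insert x0 Z" ?H] by auto
    moreover have "connM (insert x0 Z) \<ge> int (card Z)" using connM_insert_Z_ge_card Z3 x0 by auto
    ultimately show False using hyperplane connM_eq[of "insert x0 Z"] by linarith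
  qed
qed

lemma minor_3conn_two_of_pair_conn:
  assumes "v \<in> Z" "u \<in> Z" "v \<noteq> u"
    and pairs: "card Z \<ge> 3 \<Longrightarrow> \<forall>s\<in>{v, u}. \<forall>x\<in>F. conn {v, u} {s, x} \<ge> 2"
  shows "minor_3conn E r (C - {v, u}) (D - {v, u})"
proof (cases "{v, u} = Z")
  case True
  then have "C - {v, u} = {}" "D - {v, u} = {}" by auto
  then show ?thesis using minor_3conn_M by (simp only:)
next
  case False
  then have "{v, u} \<subset> Z" using assms by auto
  then have "card {v, u} < card Z" using finite_Z by (rule psubset_card_mono[rotated])
  then have "card Z \<ge> 3" using assms by simp
  then show ?thesis using minor_3conn_of_pair_conn[of "{v, u}"] pairs assms by simp
qed

lemma contract_restoration_neighbour:
  assumes S: "S \<subseteq> Z" and v: "v \<in> S" "v \<in> C" and x0: "x0 \<in> F" "card F \<ge> 2"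
    and low: "conn {v} {v, x0} < 2" and high: "conn S {v, x0} \<ge> 2"
  shows "\<exists>u\<in>S. restoration_adj E r C D v u"
proof -
  have hyperplane: "r (E - D - {v, x0}) + 1 = r E" using contract_hyperplane v x0 low by auto
  then obtain u where u: "u \<in> S" "u \<in> D"
    and u_out: "r (insert u (E - D - {v, x0})) = r (E - D - {v, x0}) + 1"
    using contract_exists_restoring[OF S v x0(1)] high by auto
  have "minor_3conn E r (C - {v, u}) (D - {v, u})"
  proof (rule minor_3conn_two_of_pair_conn)
    show "v \<in> Z" "u \<in> Z" "v \<noteq> u" using v u C_D_disjoint by auto
    show "\<forall>s\<in>{v, u}. \<forall>x\<in>F. conn {v, u} {s, x} \<ge> 2" if "card Z \<ge> 3"
      using contract_restored_pair_v[OF v(2) u(2) x0(1) _ card_F_ge_4[OF that] hyperplane u_out]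
        contract_restored_pair_u[OF v(2) u(2) x0(1) _ that hyperplane u_out] by auto
  qed
  then show ?thesis using restoration_adj_iff u v by auto
qed

lemma rank_insert_C: "v \<in> D \<Longrightarrow> r (insert v C) = card C + 1"
proof -
  assume v: "v \<in> D"
  then have "v \<notin> C" "finite C" using C_D_disjoint finite_Z by auto
  then show ?thesis using rank_subset_Z[of "insert v C"] v by simp
qed

lemma delete_pair_rank:
  assumes v: "v \<in> D" and x0: "x0 \<in> F" "card F \<ge> 2" and low: "conn {v} {v, x0} < 2"
  shows "r (insert v (insert x0 C)) = card C + 1"
proof -
  have N: "r (E - D - {x0}) = r E" using N_no_loop_coloop x0 by auto
  have "C - {v} = C" using v C_D_disjoint by auto
  have "conn {v} {v, x0} = int (r (insert v (insert x0 C))) + int (r (E - D - {x0})) - int (card C) - int (r E)"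
    by (rule conn_eqI) (use v x0 C_D_disjoint D_subset \<open>C - {v} = C\<close> in auto)
  then have "r (insert v (insert x0 C)) \<le> card C + 1" using low N by linarith
  moreover have "r (insert v C) = card C + 1" using rank_insert_C v by simp
  moreover have "r (insert v C) \<le> r (insert v (insert x0 C))"
    using rank_mono[of "insert v C" "insert v (insert x0 C)"] v x0 C_subset D_subset by auto
  ultimately show ?thesis by simp
qed

lemma delete_rank_Diff_le:
  assumes v: "v \<in> D" and x0: "x0 \<in> F" and W: "W \<subseteq> C"
    and base: "r (insert v (insert x0 C)) \<le> card C + 1"
    and each: "\<forall>u\<in>W. r (insert v (insert x0 (C - {u}))) \<le> card C"
  shows "r (insert v (insert x0 (C - W))) \<le> card (C - W) + 1"
proof -
  have "finite W" using W finite_Z finite_subset by auto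
  have indep: "r (insert v C) = card C + 1" using rank_insert_C v by simp
  show ?thesis using \<open>finite W\<close> W each
  proof (induction W)
    case empty
    then show ?case using base by simp
  next
    case (insert u W)
    let ?P = "insert v (insert x0 (C - W))" and ?Q = "insert v (insert x0 (C - {u}))"
    have PE: "?P \<subseteq> E" "?Q \<subseteq> E" using v x0 C_subset D_subset by auto
    have IH: "r ?P \<le> card (C - W) + 1" using insert by auto
    have uC: "u \<in> C" "u \<notin> W" using insert by auto
    have Q: "r ?Q \<le> card C" using insert by auto
    have "?P \<union> ?Q = insert v (insert x0 C)" using insert by auto
    moreover have "r (insert v C) \<le> r (insert v (insert x0 C))"
      using rank_mono[of "insert v C" "insert v (insert x0 C)"] v x0 C_subset D_subset by auto
    ultimately have "r (insert v C) \<le> r (?P \<union> ?Q)" by simp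
    moreover have "r (?P \<union> ?Q) + r (?P \<inter> ?Q) \<le> r ?P + r ?Q" by (rule rank_submod) (use PE in auto)
    ultimately have "r (?P \<inter> ?Q) \<le> card (C - W)" using IH Q indep by linarith
    moreover have "?P \<inter> ?Q = insert v (insert x0 (C - insert u W))" using v x0 C_D_disjoint by auto
    moreover have "card (C - W) = card (C - insert u W) + 1" using uC finite_Z
      by (metis Diff_insert Suc_eq_plus1 card_Diff1_less_iff card_Suc_Diff1 finite_Diff finite_Un Diff_iff insert_Diff_single)
    ultimately show ?case by simp
  qed
qed

lemma delete_exists_restoring:
  assumes S: "S \<subseteq> Z" and v: "v \<in> S" "v \<in> D" and x0: "x0 \<in> F"
    and base: "r (insert v (insert x0 C)) = card C + 1" and high: "conn S {v, x0} \<ge> 2"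
  shows "\<exists>u\<in>S \<inter> C. r (insert v (insert x0 (C - {u}))) \<ge> card C + 1"
proof (rule ccontr)
  assume "\<not> ?thesis"
  then have "\<forall>u\<in>S \<inter> C. r (insert v (insert x0 (C - {u}))) \<le> card C" by (simp add: not_le less_Suc_eq_le)
  then have "r (insert v (insert x0 (C - (S \<inter> C)))) \<le> card (C - (S \<inter> C)) + 1"
    using delete_rank_Diff_le[OF v(2) x0, of "S \<inter> C"] base by auto
  moreover have "C - (S \<inter> C) = C - S" by auto
  ultimately have P: "r (insert v (insert x0 (C - S))) \<le> card (C - S) + 1" by simp
  have "conn S {v, x0} = int (r (insert v (insert x0 (C - S)))) + int (r (E - (D - S) - {v, x0}))
      - int (card (C - S)) - int (r E)"
    by (rule conn_eqI) (use v x0 S in auto)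
  moreover have "r (E - (D - S) - {v, x0}) \<le> r E" by (rule rank_mono) auto
  ultimately show False using P high by linarith
qed

lemma delete_restored_pair_v:
  assumes v: "v \<in> D" and u: "u \<in> C" and x0: "x0 \<in> F" and x: "x \<in> F" and F4: "card F \<ge> 4"
    and base: "r (insert v (insert x0 C)) = card C + 1"
    and u_out: "r (insert v (insert x0 (C - {u}))) \<ge> card C + 1"
  shows "conn {v, u} {v, x} \<ge> 2"
proof (rule ccontr)
  assume low: "\<not> conn {v, u} {v, x} \<ge> 2"
  have N: "r (E - D - {x}) = r E" using N_no_loop_coloop x F4 by auto
  have "card (C - {u}) = card C - 1" "card C \<ge> 1" using card_Diff_singleton_Z u by auto
  moreover have "C - {v, u} = C - {u}" "D - {v, u} = D - {v}" using u v C_D_disjoint by auto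
  moreover have "conn {v, u} {v, x} = int (r (insert v (insert x (C - {u})))) + int (r (E - D - {x}))
      - int (card C - 1) - int (r E)"
    by (rule conn_eqI) (use v u x C_D_disjoint C_subset D_subset in \<open>auto simp: calculation\<close>)
  ultimately have low_x: "r (insert v (insert x (C - {u}))) \<le> card C" using low N by linarith
  show False
  proof (cases "x = x0")
    case True
    then show False using low_x u_out by simp
  next
    case False
    text \<open>Submodularity on \<open>C \<union> {v, x}\<close> and \<open>C \<union> {v, x\<^sub>0}\<close>, which meet in the independent
      set \<open>C \<union> {v}\<close>, puts \<open>x\<close> and \<open>x\<^sub>0\<close> into one rank-one extension of \<open>C\<close>.\<close>
    let ?Px = "insert v (insert x C)" and ?P0 = "insert v (insert x0 C)"
    have PE: "?Px \<subseteq> E" "?P0 \<subseteq> E" using v x x0 C_subset D_subset by auto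
    have "r (insert u (insert v (insert x (C - {u})))) \<le> r (insert v (insert x (C - {u}))) + 1"
      by (rule rank_insert_le) (use u v x C_subset D_subset in auto)
    moreover have "insert u (insert v (insert x (C - {u}))) = ?Px" using u by auto
    ultimately have "r ?Px \<le> card C + 1" using low_x by simp
    moreover have "?Px \<inter> ?P0 = insert v C" using False x x0 by auto
    then have "r (?Px \<union> ?P0) + r (insert v C) \<le> r ?Px + r ?P0" using rank_submod[OF PE] by simp
    moreover have "r (C \<union> {x, x0}) \<le> r (?Px \<union> ?P0)" by (rule rank_mono) (use PE in auto)
    ultimately have "r (C \<union> {x, x0}) \<le> card C + 1" using base rank_insert_C[OF v] by linarith
    moreover have "r (E - D - {x, x0}) \<le> r E" by (rule rank_mono) auto
    ultimately show False using N_pair_conn[of x x0] x x0 False F4 by linarith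
  qed
qed

lemma delete_restored_pair_u:
  assumes v: "v \<in> D" and u: "u \<in> C" and x0: "x0 \<in> F" and x: "x \<in> F" and Z3: "card Z \<ge> 3"
    and base: "r (insert v (insert x0 C)) = card C + 1"
    and u_out: "r (insert v (insert x0 (C - {u}))) \<ge> card C + 1"
  shows "conn {v, u} {u, x} \<ge> 2"
proof (rule ccontr)
  let ?J = "E - (D - {v}) - {u, x}"
  assume low: "\<not> conn {v, u} {u, x} \<ge> 2"
  have N: "r (insert x C) = card C + 1" "r (E - D - {x}) = r E"
    using N_no_loop_coloop x card_F_ge_4[OF Z3] by auto
  have "card (C - {u}) = card C - 1" "card C \<ge> 1" using card_Diff_singleton_Z u by auto
  moreover have "C - {v, u} = C - {u}" "D - {v, u} = D - {v}" using u v C_D_disjoint by auto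
  moreover have "conn {v, u} {u, x} = int (r (insert x C)) + int (r ?J) - int (card C - 1) - int (r E)"
    by (rule conn_eqI) (use v u x C_D_disjoint in \<open>auto simp: calculation\<close>)
  ultimately have low_J: "int (r ?J) \<le> int (r E) - 1" using low N by linarith
  show False
  proof (cases "x = x0")
    case False
    text \<open>\<open>u\<close> lies in the closure of \<open>C - {u} \<union> {v, x\<^sub>0} \<subseteq> J\<close>, hence in that of \<open>J\<close>, but
      \<open>J \<union> {u}\<close> is spanning.\<close>
    let ?Y = "insert v (insert x0 (C - {u}))"
    have "?Y \<subseteq> ?J" using v u x0 x False C_subset D_subset C_D_disjoint by auto
    moreover have "insert u ?Y = insert v (insert x0 C)" using u by auto
    moreover have "r ?Y \<le> r (insert u ?Y)" by (rule rank_mono) (use u v x0 C_subset D_subset in auto)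
    ultimately have "r (insert u ?Y) = r ?Y" using u_out base by simp
    then have "r (insert u ?J) = r ?J"
      using rank_insert_eq_mono[of ?Y ?J u] \<open>?Y \<subseteq> ?J\<close> u C_subset by auto
    moreover have "r (E - D - {x}) \<le> r (insert u ?J)" by (rule rank_mono) (use u C_subset in auto)
    ultimately show False using low_J N by linarith
  next
    case True
    text \<open>Here \<open>Z \<union> {x\<^sub>0}\<close> would have connectivity below \<open>|Z|\<close>.\<close>
    have "insert x0 Z = insert v (insert x0 C) \<union> (D - {v})" using v by auto
    then have "r (insert x0 Z) \<le> r (insert v (insert x0 C)) + card (D - {v})"
      using rank_union_le_card[of "insert v (insert x0 C)" "D - {v}"] v x0 C_subset D_subset by auto
    moreover have "card (D - {v}) = card D - 1" "card D \<ge> 1" using card_Diff_singleton_Z v by auto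
    moreover have "card Z = card C + card D" using C_D_disjoint finite_Z by (simp add: card_Un_disjoint)
    ultimately have "r (insert x0 Z) \<le> card Z" using base by simp
    moreover have "r (E - insert x0 Z) \<le> r ?J" by (rule rank_mono) (use True u in auto)
    moreover have "connM (insert x0 Z) \<ge> int (card Z)" using connM_insert_Z_ge_card Z3 x0 by auto
    ultimately show False using low_J connM_eq[of "insert x0 Z"] by linarith
  qed
qed

lemma delete_restoration_neighbour:
  assumes S: "S \<subseteq> Z" and v: "v \<in> S" "v \<in> D" and x0: "x0 \<in> F" "card F \<ge> 2"
    and low: "conn {v} {v, x0} < 2" and high: "conn S {v, x0} \<ge> 2"
  shows "\<exists>u\<in>S. restoration_adj E r C D v u"
proof -
  have base: "r (insert v (insert x0 C)) = card C + 1" using delete_pair_rank v x0 low by auto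
  then obtain u where u: "u \<in> S" "u \<in> C"
    and u_out: "r (insert v (insert x0 (C - {u}))) \<ge> card C + 1"
    using delete_exists_restoring[OF S v x0(1)] high by auto
  have "minor_3conn E r (C - {v, u}) (D - {v, u})"
  proof (rule minor_3conn_two_of_pair_conn)
    show "v \<in> Z" "u \<in> Z" "v \<noteq> u" using v u C_D_disjoint by auto
    show "\<forall>s\<in>{v, u}. \<forall>x\<in>F. conn {v, u} {s, x} \<ge> 2" if "card Z \<ge> 3"
      using delete_restored_pair_v[OF v(2) u(2) x0(1) _ card_F_ge_4[OF that] base u_out]
        delete_restored_pair_u[OF v(2) u(2) x0(1) _ that base u_out] by auto
  qed
  then show ?thesis using restoration_adj_iff u v by auto
qed

lemma no_isolated_of_minor_3conn:
  assumes S: "S \<subseteq> Z" and S_3conn: "minor_3conn E r (C - S) (D - S)"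
  shows "no_isolated_nonpriv E r C D S"
  unfolding no_isolated_nonpriv_def
proof (intro ballI impI)
  fix v assume v: "v \<in> S" and not_priv: "\<not> privileged E r C D v"
  then have v_3conn: "\<not> minor_3conn E r (C - {v}) (D - {v})" using S unfolding privileged_def by blast
  then have "S \<noteq> {v}" using S_3conn by auto
  then obtain w where "w \<in> S" "w \<noteq> v" using v by blast
  then have "card {v, w} \<le> card S" using v S finite_Z finite_subset by (intro card_mono) auto
  then have S2: "card S \<ge> 2" using \<open>w \<noteq> v\<close> by simp
  moreover have "card S \<le> card Z" using S finite_Z by (simp add: card_mono)
  ultimately have F2: "card F \<ge> 2" using card_Z_le_card_F by simp
  obtain x0 where x0: "x0 \<in> F" and low: "conn {v} {v, x0} < 2"
    using minor_3conn_of_pair_conn[of "{v}"] v_3conn v S by force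
  have high: "conn S {v, x0} \<ge> 2" using pair_conn_ge_2[OF S S_3conn v x0] F2 S2 by simp
  show "\<exists>u\<in>S. restoration_adj E r C D v u"
  proof (cases "v \<in> C")
    case True
    show ?thesis using contract_restoration_neighbour[OF S v True x0 F2 low high] .
  next
    case False
    then have "v \<in> D" using v S by auto
    then show ?thesis using delete_restoration_neighbour[OF S v _ x0 F2 low high] by simp
  qed
qed

end

theorem lemma4p5:
  fixes E :: "'a set" and r :: "'a set \<Rightarrow> nat" and \<theta> :: nat and T :: "'a set set"
    and C D S :: "'a set"
  assumes "matroid_rank E r"
    and "three_connected E r"
    and "is_tangle E r \<theta> T"
    and "C \<subseteq> E" and "D \<subseteq> E" and "C \<inter> D = {}"
    and "tangle_indep E r \<theta> T (C \<union> D)"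
    and "minor_3conn E r C D"
    and "S \<subseteq> C \<union> D"
  shows "minor_3conn E r (C - S) (D - S) \<longleftrightarrow> no_isolated_nonpriv E r C D S"
proof -
  interpret restoration_setting E r \<theta> T C D
    using assms by unfold_locales auto
  show ?thesis
    using no_isolated_of_minor_3conn minor_3conn_of_no_isolated assms(9) by blast
qed

end
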